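(* Let $X$ be an $\operatorname{Irr}$-continuous $T_0$ space. Then for every $x\in X$, $$x=\bigvee\bigcup\{\twoheaddownarrow_{\operatorname{Irr}} y \mid y\ll_{\operatorname{Irr}} x\}.$$
   Context: For a topological space $X$, a nonempty subset $E$ is irreducible if whenever $E\subseteq A_1\cup A_2$ with $A_1,A_2$ closed, $E\subseteq A_1$ or $E\subseteq A_2$. The specialisation order is $x\le y$ iff $x\in\operatorname{cl}(\{y\})$; $\uparrow x=\{z:z\ge x\}$; $\bigvee$ denotes supremum in this order. $\operatorname{Irr}^+(X)$ is the set of irreducible subsets of $X$ whose supremum exists. $x\ll_{\operatorname{Irr}} y$ iff for every $E\in\operatorname{Irr}^+(X)$ with $\bigvee E\ge y$, $E\cap\uparrow x\ne\emptyset$; $\twoheaddownarrow_{\operatorname{Irr}} x=\{y:y\ll_{\operatorname{Irr}} x\}$. $X$ is $\operatorname{Irr}$-continuous if for every $x$, $\twoheaddownarrow_{\operatorname{Irr}} x$ is irreducible and $x=\bigvee\twoheaddownarrow_{\operatorname{Irr}} x$. *)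

theory Defs
  imports "HOL-Analysis.Analysis"
begin

definition irreducible_in :: "'a topology \<Rightarrow> 'a set \<Rightarrow> bool" where
  "irreducible_in X E \<longleftrightarrow> E \<noteq> {} \<and> E \<subseteq> topspace X \<and>
     (\<forall>A1 A2. closedin X A1 \<and> closedin X A2 \<and> E \<subseteq> A1 \<union> A2 \<longrightarrow> E \<subseteq> A1 \<or> E \<subseteq> A2)"

definition spec_le :: "'a topology \<Rightarrow> 'a \<Rightarrow> 'a \<Rightarrow> bool" where
  "spec_le X x y \<longleftrightarrow> x \<in> topspace X \<and> y \<in> topspace X \<and> x \<in> X closure_of {y}"

definition up_set :: "'a topology \<Rightarrow> 'a \<Rightarrow> 'a set" where
  "up_set X x = {z \<in> topspace X. spec_le X x z}"

definition is_sup :: "'a topology \<Rightarrow> 'a set \<Rightarrow> 'a \<Rightarrow> bool" where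
  "is_sup X E s \<longleftrightarrow> s \<in> topspace X \<and> (\<forall>e\<in>E. spec_le X e s) \<and>
     (\<forall>u\<in>topspace X. (\<forall>e\<in>E. spec_le X e u) \<longrightarrow> spec_le X s u)"

definition Irr_plus :: "'a topology \<Rightarrow> 'a set set" where
  "Irr_plus X = {E. irreducible_in X E \<and> (\<exists>s. is_sup X E s)}"

definition way_below_Irr :: "'a topology \<Rightarrow> 'a \<Rightarrow> 'a \<Rightarrow> bool" where
  "way_below_Irr X x y \<longleftrightarrow> x \<in> topspace X \<and> y \<in> topspace X \<and>
     (\<forall>E\<in>Irr_plus X. \<forall>s. is_sup X E s \<and> spec_le X y s \<longrightarrow> E \<inter> up_set X x \<noteq> {})"

definition ddown_Irr :: "'a topology \<Rightarrow> 'a \<Rightarrow> 'a set" where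
  "ddown_Irr X x = {y \<in> topspace X. way_below_Irr X y x}"

definition Irr_continuous :: "'a topology \<Rightarrow> bool" where
  "Irr_continuous X \<longleftrightarrow> (\<forall>x\<in>topspace X. irreducible_in X (ddown_Irr X x) \<and> is_sup X (ddown_Irr X x) x)"

end

theory Submission
  imports Defs
begin

text \<open>Every \<open>y \<ll>\<^sub>I\<^sub>r\<^sub>r x\<close> is the supremum of \<open>\<twoheaddownarrow>\<^sub>I\<^sub>r\<^sub>r y\<close>, and \<open>x\<close> is the
  supremum of all such \<open>y\<close>; a supremum of suprema is the supremum of the union.\<close>

lemma spec_le_trans: "spec_le X a b \<Longrightarrow> spec_le X b c \<Longrightarrow> spec_le X a c"
  unfolding spec_le_def
  by (metis closure_of_minimal closedin_closure_of empty_subsetI insert_subset subsetD)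

lemma is_sup_UN:
  assumes "\<And>i. i \<in> I \<Longrightarrow> is_sup X (A i) (s i)" and "is_sup X (s ` I) x"
  shows "is_sup X (\<Union>i\<in>I. A i) x"
  unfolding is_sup_def
proof (intro conjI ballI impI)
  show "x \<in> topspace X"
    using assms(2) by (simp add: is_sup_def)
  show "spec_le X e x" if e: "e \<in> (\<Union>i\<in>I. A i)" for e
  proof -
    obtain i where "i \<in> I" and "e \<in> A i"
      using e by blast
    then have "spec_le X e (s i)" and "spec_le X (s i) x"
      using assms by (auto simp: is_sup_def)
    then show ?thesis
      by (rule spec_le_trans)
  qed
  show "spec_le X x u"
    if "u \<in> topspace X" and "\<forall>e\<in>(\<Union>i\<in>I. A i). spec_le X e u" for u
  proof -
    have "spec_le X (s i) u" if "i \<in> I" for i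
      using assms(1)[OF \<open>i \<in> I\<close>] \<open>u \<in> topspace X\<close> \<open>\<forall>e\<in>_. spec_le X e u\<close> \<open>i \<in> I\<close>
      unfolding is_sup_def by blast
    then show ?thesis
      using assms(2) \<open>u \<in> topspace X\<close> unfolding is_sup_def by blast
  qed
qed

theorem lemma3p4:
  fixes X :: "'a topology"
  assumes "Irr_continuous X" and "t0_space X" and "x \<in> topspace X"
  shows "is_sup X (\<Union>{ddown_Irr X y | y. way_below_Irr X y x}) x"
proof -
  have union: "\<Union>{ddown_Irr X y | y. way_below_Irr X y x} = (\<Union>y\<in>ddown_Irr X x. ddown_Irr X y)"
    by (auto simp: ddown_Irr_def way_below_Irr_def)
  have "is_sup X (ddown_Irr X y) y" if "y \<in> ddown_Irr X x" for y
    using assms(1) that unfolding Irr_continuous_def ddown_Irr_def by blast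
  moreover have "is_sup X ((\<lambda>y. y) ` ddown_Irr X x) x"
    using assms(1,3) unfolding Irr_continuous_def by simp
  ultimately have "is_sup X (\<Union>y\<in>ddown_Irr X x. ddown_Irr X y) x"
    by (rule is_sup_UN)
  then show ?thesis
    unfolding union .
qed

end
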